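(* Let $G'$ and $G''$ be two bridgeless cubic graphs that are not 3-edge-colorable. If $G$ is a 2-junction of $G'$ and $G''$, then $\mu_3(G)=\mu_3(G')+\mu_3(G'')$.
   Context: Graphs may have multiple edges. A 1-factor is a spanning 1-regular subgraph. For a cubic graph $H$ and 1-factors $M_1,M_2,M_3$ of $H$, an edge is uncovered if it lies in none of $M_1,M_2,M_3$; $\mu_3(H)$ is the minimum number of uncovered edges over all lists (with possible repetition) of three 1-factors of $H$. A $\mu_3(H)$-core is the subgraph of $H$ induced by the edges lying in none or in at least two of $M_1,M_2,M_3$, for some $M_1,M_2,M_3$ with exactly $\mu_3(H)$ uncovered edges. A 2-junction of $G'$ and $G''$: let $e'=xy$ be an uncovered edge of a $\mu_3(G')$-core of $G'$ and $e''=uv$ an uncovered edge of a $\mu_3(G'')$-core of $G''$; the 2-junction is the graph $G$ with $V(G)=V(G')\cup V(G'')$ and $E(G)=(E(G')\cup E(G'')\cup\{ux,vy\})\setminus\{e',e''\}$. *)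

theory Defs
  imports Main
begin

text \<open>A finite loopless multigraph is given by a vertex set V, an edge set E
(edges are abstract objects, so parallel edges are allowed) and an incidence
map ends assigning to each edge its two distinct end vertices.\<close>

definition multigraph :: "'v set \<Rightarrow> 'e set \<Rightarrow> ('e \<Rightarrow> 'v set) \<Rightarrow> bool" where
  "multigraph V E ends \<longleftrightarrow> finite V \<and> finite E \<and>
     (\<forall>e\<in>E. ends e \<subseteq> V \<and> card (ends e) = 2)"

definition incident :: "'e set \<Rightarrow> ('e \<Rightarrow> 'v set) \<Rightarrow> 'v \<Rightarrow> 'e set" where
  "incident E ends v = {e\<in>E. v \<in> ends e}"

definition cubic :: "'v set \<Rightarrow> 'e set \<Rightarrow> ('e \<Rightarrow> 'v set) \<Rightarrow> bool" where
  "cubic V E ends \<longleftrightarrow> multigraph V E ends \<and> (\<forall>v\<in>V. card (incident E ends v) = 3)"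

definition adj :: "'e set \<Rightarrow> ('e \<Rightarrow> 'v set) \<Rightarrow> 'v \<Rightarrow> 'v \<Rightarrow> bool" where
  "adj E ends a b \<longleftrightarrow> (\<exists>e\<in>E. ends e = {a, b})"

definition bridgeless :: "'v set \<Rightarrow> 'e set \<Rightarrow> ('e \<Rightarrow> 'v set) \<Rightarrow> bool" where
  "bridgeless V E ends \<longleftrightarrow>
     (\<forall>e\<in>E. \<forall>a b. ends e = {a, b} \<longrightarrow> (adj (E - {e}) ends)\<^sup>*\<^sup>* a b)"

definition three_edge_colorable :: "'v set \<Rightarrow> 'e set \<Rightarrow> ('e \<Rightarrow> 'v set) \<Rightarrow> bool" where
  "three_edge_colorable V E ends \<longleftrightarrow>
     (\<exists>c :: 'e \<Rightarrow> nat. (\<forall>e\<in>E. c e < 3) \<and>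
        (\<forall>e1\<in>E. \<forall>e2\<in>E. e1 \<noteq> e2 \<and> ends e1 \<inter> ends e2 \<noteq> {} \<longrightarrow> c e1 \<noteq> c e2))"

definition one_factor :: "'v set \<Rightarrow> 'e set \<Rightarrow> ('e \<Rightarrow> 'v set) \<Rightarrow> 'e set \<Rightarrow> bool" where
  "one_factor V E ends M \<longleftrightarrow> M \<subseteq> E \<and> (\<forall>v\<in>V. card (incident M ends v) = 1)"

definition uncovered :: "'e set \<Rightarrow> 'e set \<Rightarrow> 'e set \<Rightarrow> 'e set \<Rightarrow> 'e set" where
  "uncovered E M1 M2 M3 = E - (M1 \<union> M2 \<union> M3)"

definition mu3 :: "'v set \<Rightarrow> 'e set \<Rightarrow> ('e \<Rightarrow> 'v set) \<Rightarrow> nat" where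
  "mu3 V E ends = Min {card (uncovered E M1 M2 M3) | M1 M2 M3.
      one_factor V E ends M1 \<and> one_factor V E ends M2 \<and> one_factor V E ends M3}"

definition core_edges :: "'e set \<Rightarrow> 'e set \<Rightarrow> 'e set \<Rightarrow> 'e set \<Rightarrow> 'e set" where
  "core_edges E M1 M2 M3 = {e\<in>E. card {i::nat. i < 3 \<and> e \<in> [M1, M2, M3] ! i} \<noteq> 1}"

definition uncovered_edge_of_mu3_core :: "'v set \<Rightarrow> 'e set \<Rightarrow> ('e \<Rightarrow> 'v set) \<Rightarrow> 'e \<Rightarrow> bool" where
  "uncovered_edge_of_mu3_core V E ends e \<longleftrightarrow>
     (\<exists>M1 M2 M3. one_factor V E ends M1 \<and> one_factor V E ends M2 \<and> one_factor V E ends M3 \<and>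
        card (uncovered E M1 M2 M3) = mu3 V E ends \<and>
        e \<in> core_edges E M1 M2 M3 \<and> e \<in> uncovered E M1 M2 M3)"

definition two_junction ::
  "'v set \<Rightarrow> 'e set \<Rightarrow> ('e \<Rightarrow> 'v set) \<Rightarrow>
   'v set \<Rightarrow> 'e set \<Rightarrow> ('e \<Rightarrow> 'v set) \<Rightarrow>
   'v set \<Rightarrow> 'e set \<Rightarrow> ('e \<Rightarrow> 'v set) \<Rightarrow> bool" where
  "two_junction V E ends V1 E1 ends1 V2 E2 ends2 \<longleftrightarrow>
     V1 \<inter> V2 = {} \<and> E1 \<inter> E2 = {} \<and>
     (\<exists>e1 e2 x y u v f1 f2.
        e1 \<in> E1 \<and> ends1 e1 = {x, y} \<and> uncovered_edge_of_mu3_core V1 E1 ends1 e1 \<and>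
        e2 \<in> E2 \<and> ends2 e2 = {u, v} \<and> uncovered_edge_of_mu3_core V2 E2 ends2 e2 \<and>
        f1 \<notin> E1 \<union> E2 \<and> f2 \<notin> E1 \<union> E2 \<and> f1 \<noteq> f2 \<and>
        V = V1 \<union> V2 \<and>
        E = (E1 \<union> E2 \<union> {f1, f2}) - {e1, e2} \<and>
        (\<forall>e\<in>E1 - {e1}. ends e = ends1 e) \<and>
        (\<forall>e\<in>E2 - {e2}. ends e = ends2 e) \<and>
        ends f1 = {u, x} \<and> ends f2 = {v, y})"

end

theory Submission
  imports Defs
begin

text \<open>A 1-factor M of the junction G meets the cut {f1, f2} in an even number of edges, because
both sides have an even number of vertices. So either M contains both new edges, and its trace on
each side plus the removed edge e1 (resp. e2) is a 1-factor there, or M contains neither, and its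
traces are 1-factors of the two sides avoiding e1 and e2. In both cases the number of edges of G
left uncovered by three 1-factors is the sum of the numbers left uncovered by their traces, since
e1 and e2 are uncovered exactly when f1 and f2 are. Conversely, optimal triples on the two sides
leaving e1 and e2 uncovered combine to a triple on G, giving the matching upper bound.\<close>

lemma sum_card_incident:
  assumes "finite W" "finite F" "\<forall>e\<in>F. ends e \<subseteq> W \<and> card (ends e) = 2"
  shows "(\<Sum>w\<in>W. card (incident F ends w)) = 2 * card F"
proof -
  have "(\<Sum>w\<in>W. card (incident F ends w)) = (\<Sum>w\<in>W. \<Sum>e\<in>F. of_bool (w \<in> ends e))"
    unfolding incident_def using assms(2) by (simp add: Int_def)
  also have "\<dots> = (\<Sum>e\<in>F. \<Sum>w\<in>W. of_bool (w \<in> ends e))" by (rule sum.swap)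
  also have "\<dots> = (\<Sum>e\<in>F. 2)"
  proof (rule sum.cong)
    fix e assume "e \<in> F"
    then have "W \<inter> ends e = ends e" "card (ends e) = 2" using assms(3) by auto
    then show "(\<Sum>w\<in>W. of_bool (w \<in> ends e)) = (2::nat)"
      using assms(1) by (simp add: sum.If_cases)
  qed simp
  finally show ?thesis by simp
qed

lemma one_factor_card_vertices:
  assumes "multigraph V E ends" "one_factor V E ends M"
  shows "card V = 2 * card M"
proof -
  have "finite M" "\<forall>e\<in>M. ends e \<subseteq> V \<and> card (ends e) = 2"
    using assms unfolding multigraph_def one_factor_def by (auto intro: finite_subset)
  then have "(\<Sum>w\<in>V. card (incident M ends w)) = 2 * card M"
    using assms(1) unfolding multigraph_def by (intro sum_card_incident) auto
  then show ?thesis using assms(2) unfolding one_factor_def by simp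
qed

text \<open>N is a 1-factor of the graph with the edge e = xy replaced by two pendant half-edges at x
(present iff a) and at y (present iff b). On an even number of vertices the half-edges come
in a pair and can be glued back to e.\<close>

lemma one_factor_glue_half_edges:
  assumes G: "multigraph V E ends" and even: "even (card V)"
    and e: "e \<in> E" "ends e = {x, y}" and N: "N \<subseteq> E - {e}"
    and deg: "\<forall>w\<in>V. card (incident N ends w) + of_bool (w = x \<and> a) + of_bool (w = y \<and> b) = 1"
  shows "a = b" and "one_factor V E ends (if a then insert e N else N)"
proof -
  have fin: "finite V" "finite E" and ends: "\<forall>e\<in>E. ends e \<subseteq> V \<and> card (ends e) = 2"
    using G unfolding multigraph_def by auto
  have xy: "x \<in> V" "y \<in> V" "x \<noteq> y" using ends e by (auto simp: card_2_iff doubleton_eq_iff)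
  have finN: "finite N" using N fin finite_subset by blast
  have "(\<Sum>w\<in>V. card (incident N ends w) + of_bool (w = x \<and> a) + of_bool (w = y \<and> b)) = card V"
    using deg by simp
  moreover have "(\<Sum>w\<in>V. card (incident N ends w)) = 2 * card N"
    using fin finN N ends by (intro sum_card_incident) auto
  moreover have "(\<Sum>w\<in>V. of_bool (w = z \<and> c)) = (of_bool c :: nat)" if "z \<in> V" for z c
    using that fin by (cases c) simp_all
  ultimately have "even (2 * card N + of_bool a + of_bool b)"
    using xy even by (simp add: sum.distrib)
  then show ab: "a = b" by (cases a; cases b) simp_all
  show "one_factor V E ends (if a then insert e N else N)"
    unfolding one_factor_def
  proof (intro conjI ballI)
    show "(if a then insert e N else N) \<subseteq> E" using N e by auto
  next
    fix w assume w: "w \<in> V"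
    have "e \<notin> incident N ends w" using N unfolding incident_def by auto
    moreover have "incident (insert e N) ends w =
        (if w = x \<or> w = y then insert e (incident N ends w) else incident N ends w)"
      using e unfolding incident_def by auto
    moreover have "finite (incident N ends w)" using finN unfolding incident_def by simp
    ultimately show "card (incident (if a then insert e N else N) ends w) = 1"
      using deg w ab xy(3) by (cases a) auto
  qed
qed

lemma finite_card_uncovered_values:
  assumes "finite E"
  shows "finite {card (uncovered E M1 M2 M3) | M1 M2 M3.
    one_factor V E ends M1 \<and> one_factor V E ends M2 \<and> one_factor V E ends M3}"
proof (rule finite_subset)
  show "{card (uncovered E M1 M2 M3) | M1 M2 M3.
    one_factor V E ends M1 \<and> one_factor V E ends M2 \<and> one_factor V E ends M3} \<subseteq> card ` Pow E"
    unfolding uncovered_def by auto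
qed (use assms in simp)

lemma mu3_le_card_uncovered:
  assumes "finite E" "one_factor V E ends M1" "one_factor V E ends M2" "one_factor V E ends M3"
  shows "mu3 V E ends \<le> card (uncovered E M1 M2 M3)"
  unfolding mu3_def using assms by (intro Min_le finite_card_uncovered_values) blast+

lemma mu3_eqI:
  assumes "finite E" "one_factor V E ends M1" "one_factor V E ends M2" "one_factor V E ends M3"
    and "card (uncovered E M1 M2 M3) = k"
    and "\<And>N1 N2 N3. one_factor V E ends N1 \<Longrightarrow> one_factor V E ends N2 \<Longrightarrow>
           one_factor V E ends N3 \<Longrightarrow> k \<le> card (uncovered E N1 N2 N3)"
  shows "mu3 V E ends = k"
  unfolding mu3_def using assms by (intro Min_eqI finite_card_uncovered_values) blast+

text \<open>In use, f is one of the new edges; a 1-factor of the junction contains both or neither.\<close>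

definition induced_factor :: "'e set \<Rightarrow> 'e \<Rightarrow> 'e \<Rightarrow> 'e set \<Rightarrow> 'e set" where
  "induced_factor E1 e1 f M = (if f \<in> M then insert e1 (M \<inter> E1) else M \<inter> E1)"

locale junction_of_graphs =
  fixes V :: "'v set" and E :: "'e set" and ends :: "'e \<Rightarrow> 'v set"
    and V1 E1 ends1 V2 E2 ends2 e1 x y e2 u v f1 f2
  assumes multigraph1: "multigraph V1 E1 ends1" and multigraph2: "multigraph V2 E2 ends2"
    and even1: "even (card V1)" and even2: "even (card V2)"
    and disjoint_vertices: "V1 \<inter> V2 = {}" and disjoint_edges: "E1 \<inter> E2 = {}"
    and removed1: "e1 \<in> E1" "ends1 e1 = {x, y}"
    and removed2: "e2 \<in> E2" "ends2 e2 = {u, v}"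
    and new_edges: "f1 \<notin> E1 \<union> E2" "f2 \<notin> E1 \<union> E2" "f1 \<noteq> f2"
    and vertices: "V = V1 \<union> V2"
    and edges: "E = (E1 \<union> E2 \<union> {f1, f2}) - {e1, e2}"
    and ends_old1: "\<forall>e\<in>E1 - {e1}. ends e = ends1 e"
    and ends_old2: "\<forall>e\<in>E2 - {e2}. ends e = ends2 e"
    and ends_new: "ends f1 = {u, x}" "ends f2 = {v, y}"
begin

lemma junction_swap:
  "junction_of_graphs V E ends V2 E2 ends2 V1 E1 ends1 e2 u v e1 x y f1 f2"
  using junction_of_graphs_axioms unfolding junction_of_graphs_def
  by (auto simp: insert_commute)

lemma finite_edges: "finite E"
  using multigraph1 multigraph2 unfolding edges multigraph_def by simp

lemma card_incident_side1:
  assumes "w \<in> V1" "M \<subseteq> E"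
  shows "card (incident M ends w) =
    card (incident (M \<inter> E1) ends1 w) + of_bool (w = x \<and> f1 \<in> M) + of_bool (w = y \<and> f2 \<in> M)"
proof -
  have "ends e \<subseteq> V2" if "e \<in> E2 - {e2}" for e
    using that ends_old2 multigraph2 unfolding multigraph_def by auto
  then have old2: "w \<notin> ends e" if "e \<in> E2 - {e2}" for e
    using that assms(1) disjoint_vertices by blast
  have "u \<in> V2" "v \<in> V2" using removed2 multigraph2 unfolding multigraph_def by auto
  then have new: "w \<in> ends f1 \<longleftrightarrow> w = x" "w \<in> ends f2 \<longleftrightarrow> w = y"
    using ends_new disjoint_vertices assms(1) by auto
  have "incident M ends w = incident (M \<inter> E1) ends1 w
      \<union> (if w = x \<and> f1 \<in> M then {f1} else {}) \<union> (if w = y \<and> f2 \<in> M then {f2} else {})"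
  proof (rule set_eqI)
    fix e
    have "e \<in> M \<Longrightarrow> e \<in> E1 - {e1} \<or> e \<in> E2 - {e2} \<or> e = f1 \<or> e = f2"
      using assms(2) unfolding edges by auto
    moreover have "e1 \<notin> M" using assms(2) unfolding edges by auto
    ultimately show "e \<in> incident M ends w \<longleftrightarrow> e \<in> incident (M \<inter> E1) ends1 w
        \<union> (if w = x \<and> f1 \<in> M then {f1} else {}) \<union> (if w = y \<and> f2 \<in> M then {f2} else {})"
      using old2 new ends_old1 new_edges unfolding incident_def by auto
  qed
  moreover have "card (I \<union> (if p then {f1} else {}) \<union> (if q then {f2} else {}))
      = card I + of_bool p + of_bool q" if "finite I" "f1 \<notin> I" "f2 \<notin> I" for I p q
    using that new_edges(3) by (cases p; cases q) auto
  moreover have "finite (incident (M \<inter> E1) ends1 w)"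
    using multigraph1 unfolding incident_def multigraph_def by simp
  moreover have "f1 \<notin> incident (M \<inter> E1) ends1 w" "f2 \<notin> incident (M \<inter> E1) ends1 w"
    using new_edges unfolding incident_def by auto
  ultimately show ?thesis by presburger
qed

lemma one_factor_induced1:
  assumes "one_factor V E ends M"
  shows "f1 \<in> M \<longleftrightarrow> f2 \<in> M" and "one_factor V1 E1 ends1 (induced_factor E1 e1 f1 M)"
proof -
  have "M \<subseteq> E" using assms unfolding one_factor_def by simp
  then have trace: "M \<inter> E1 \<subseteq> E1 - {e1}" unfolding edges by auto
  have deg: "\<forall>w\<in>V1. card (incident (M \<inter> E1) ends1 w)
      + of_bool (w = x \<and> f1 \<in> M) + of_bool (w = y \<and> f2 \<in> M) = 1"
  proof
    fix w assume "w \<in> V1"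
    then show "card (incident (M \<inter> E1) ends1 w)
        + of_bool (w = x \<and> f1 \<in> M) + of_bool (w = y \<and> f2 \<in> M) = 1"
      using assms card_incident_side1[OF \<open>w \<in> V1\<close> \<open>M \<subseteq> E\<close>]
      unfolding one_factor_def vertices by simp
  qed
  note glue = one_factor_glue_half_edges[OF multigraph1 even1 removed1 trace deg]
  show "f1 \<in> M \<longleftrightarrow> f2 \<in> M" using glue(1) .
  show "one_factor V1 E1 ends1 (induced_factor E1 e1 f1 M)"
    using glue(2) unfolding induced_factor_def .
qed

lemmas card_incident_side2 = junction_of_graphs.card_incident_side1[OF junction_swap]
lemmas one_factor_induced2 = junction_of_graphs.one_factor_induced1(2)[OF junction_swap]

lemma one_factor_Un:
  assumes A: "one_factor V1 E1 ends1 A" "e1 \<notin> A" and B: "one_factor V2 E2 ends2 B" "e2 \<notin> B"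
  shows "one_factor V E ends (A \<union> B)"
  unfolding one_factor_def
proof (intro conjI ballI)
  have "A \<subseteq> E1" "B \<subseteq> E2" using A B unfolding one_factor_def by auto
  then show sub: "A \<union> B \<subseteq> E" using A B disjoint_edges removed1 removed2 unfolding edges by auto
  have "(A \<union> B) \<inter> E1 = A" "(A \<union> B) \<inter> E2 = B" "f1 \<notin> A \<union> B" "f2 \<notin> A \<union> B"
    using \<open>A \<subseteq> E1\<close> \<open>B \<subseteq> E2\<close> disjoint_edges new_edges by auto
  then show "card (incident (A \<union> B) ends w) = 1" if "w \<in> V" for w
    using that sub A B card_incident_side1 card_incident_side2 unfolding vertices one_factor_def
    by auto
qed

lemma induced_factor_Un:
  assumes "A \<subseteq> E1" "B \<subseteq> E2"
  shows "induced_factor E1 e1 f1 (A \<union> B) = A" "induced_factor E2 e2 f1 (A \<union> B) = B"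
  using assms disjoint_edges new_edges unfolding induced_factor_def by auto

lemma card_uncovered_split:
  assumes M: "one_factor V E ends M1" "one_factor V E ends M2" "one_factor V E ends M3"
  defines "N i \<equiv> induced_factor E1 e1 f1 i" and "P i \<equiv> induced_factor E2 e2 f1 i"
  shows "card (uncovered E M1 M2 M3) =
    card (uncovered E1 (N M1) (N M2) (N M3)) + card (uncovered E2 (P M1) (P M2) (P M3))"
proof -
  let ?U1 = "uncovered E1 (N M1) (N M2) (N M3)" and ?U2 = "uncovered E2 (P M1) (P M2) (P M3)"
  have sub: "M1 \<subseteq> E" "M2 \<subseteq> E" "M3 \<subseteq> E" using M unfolding one_factor_def by auto
  have f12: "f1 \<in> M1 \<longleftrightarrow> f2 \<in> M1" "f1 \<in> M2 \<longleftrightarrow> f2 \<in> M2" "f1 \<in> M3 \<longleftrightarrow> f2 \<in> M3"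
    using M one_factor_induced1(1) by blast+
  have fin: "finite ?U1" "finite ?U2"
    using multigraph1 multigraph2 unfolding uncovered_def multigraph_def by auto
  have disj: "?U1 \<inter> ?U2 = {}" using disjoint_edges unfolding uncovered_def by auto
  have removed_notin: "e1 \<notin> E2" "e2 \<notin> E1" "e1 \<notin> E" "e2 \<notin> E"
    using disjoint_edges removed1 removed2 unfolding edges by auto
  show ?thesis
  proof (cases "f1 \<in> M1 \<or> f1 \<in> M2 \<or> f1 \<in> M3")
    case True
    then have "uncovered E M1 M2 M3 = ?U1 \<union> ?U2"
      using f12 sub removed_notin removed1 removed2 new_edges
      unfolding uncovered_def edges N_def P_def induced_factor_def by auto
    then show ?thesis using fin disj by (simp add: card_Un_disjoint)
  next
    case False
    then have "uncovered E M1 M2 M3 = insert f1 (insert f2 (?U1 - {e1} \<union> (?U2 - {e2})))"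
      using f12 sub removed_notin removed1 removed2 new_edges
      unfolding uncovered_def edges N_def P_def induced_factor_def by auto
    moreover have "e1 \<in> ?U1" "e2 \<in> ?U2"
      using False sub removed_notin removed1 removed2
      unfolding uncovered_def N_def P_def induced_factor_def by auto
    moreover have "f1 \<notin> ?U1 \<union> ?U2" "f2 \<notin> ?U1 \<union> ?U2"
      using new_edges unfolding uncovered_def by auto
    moreover have "card (?U1 - {e1} \<union> (?U2 - {e2})) = card (?U1 - {e1}) + card (?U2 - {e2})"
      using fin disj by (intro card_Un_disjoint) auto
    moreover have "card ?U1 > 0" "card ?U2 > 0"
      using fin calculation(2,3) by (auto simp: card_gt_0_iff)
    ultimately show ?thesis
      using fin new_edges(3) by simp
  qed
qed


lemma mu3_junction:
  assumes "uncovered_edge_of_mu3_core V1 E1 ends1 e1" "uncovered_edge_of_mu3_core V2 E2 ends2 e2"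
  shows "mu3 V E ends = mu3 V1 E1 ends1 + mu3 V2 E2 ends2"
proof -
  obtain A1 A2 A3 B1 B2 B3 where
    A: "one_factor V1 E1 ends1 A1" "one_factor V1 E1 ends1 A2" "one_factor V1 E1 ends1 A3"
      "card (uncovered E1 A1 A2 A3) = mu3 V1 E1 ends1" "e1 \<in> uncovered E1 A1 A2 A3" and
    B: "one_factor V2 E2 ends2 B1" "one_factor V2 E2 ends2 B2" "one_factor V2 E2 ends2 B3"
      "card (uncovered E2 B1 B2 B3) = mu3 V2 E2 ends2" "e2 \<in> uncovered E2 B1 B2 B3"
    using assms unfolding uncovered_edge_of_mu3_core_def by blast
  have sub: "A1 \<subseteq> E1" "A2 \<subseteq> E1" "A3 \<subseteq> E1" "B1 \<subseteq> E2" "B2 \<subseteq> E2" "B3 \<subseteq> E2"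
    using A B unfolding one_factor_def by auto
  show ?thesis
  proof (rule mu3_eqI[OF finite_edges])
    show "one_factor V E ends (A1 \<union> B1)" "one_factor V E ends (A2 \<union> B2)"
      "one_factor V E ends (A3 \<union> B3)"
      using A B by (auto intro!: one_factor_Un simp: uncovered_def)
    then show "card (uncovered E (A1 \<union> B1) (A2 \<union> B2) (A3 \<union> B3)) =
        mu3 V1 E1 ends1 + mu3 V2 E2 ends2"
      using A(4) B(4) sub by (simp add: card_uncovered_split induced_factor_Un)
  next
    fix M1 M2 M3 assume "one_factor V E ends M1" "one_factor V E ends M2" "one_factor V E ends M3"
    then show "mu3 V1 E1 ends1 + mu3 V2 E2 ends2 \<le> card (uncovered E M1 M2 M3)"
      using multigraph1 multigraph2
      by (simp add: card_uncovered_split add_mono mu3_le_card_uncovered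
          one_factor_induced1(2) one_factor_induced2 multigraph_def)
  qed
qed

end

lemma two_junction_elim:
  assumes "multigraph V1 E1 ends1" "multigraph V2 E2 ends2"
    and "two_junction V E ends V1 E1 ends1 V2 E2 ends2"
  obtains e1 x y e2 u v f1 f2
  where "junction_of_graphs V E ends V1 E1 ends1 V2 E2 ends2 e1 x y e2 u v f1 f2"
    and "uncovered_edge_of_mu3_core V1 E1 ends1 e1" "uncovered_edge_of_mu3_core V2 E2 ends2 e2"
proof -
  from assms(3) obtain e1 x y e2 u v f1 f2 where
    junction: "V1 \<inter> V2 = {}" "E1 \<inter> E2 = {}" "e1 \<in> E1" "ends1 e1 = {x, y}"
      "e2 \<in> E2" "ends2 e2 = {u, v}" "f1 \<notin> E1 \<union> E2" "f2 \<notin> E1 \<union> E2" "f1 \<noteq> f2"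
      "V = V1 \<union> V2" "E = (E1 \<union> E2 \<union> {f1, f2}) - {e1, e2}"
      "\<forall>e\<in>E1 - {e1}. ends e = ends1 e" "\<forall>e\<in>E2 - {e2}. ends e = ends2 e"
      "ends f1 = {u, x}" "ends f2 = {v, y}"
    and core: "uncovered_edge_of_mu3_core V1 E1 ends1 e1" "uncovered_edge_of_mu3_core V2 E2 ends2 e2"
    unfolding two_junction_def by blast
  from core obtain A B where "one_factor V1 E1 ends1 A" "one_factor V2 E2 ends2 B"
    unfolding uncovered_edge_of_mu3_core_def by blast
  then have "even (card V1)" "even (card V2)"
    using assms(1,2) one_factor_card_vertices by fastforce+
  with assms(1,2) junction
  have "junction_of_graphs V E ends V1 E1 ends1 V2 E2 ends2 e1 x y e2 u v f1 f2"
    by unfold_locales auto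
  then show thesis using core by (rule that)
qed

theorem mainTheorem7:
  fixes V1 V2 V :: "'v set" and E1 E2 E :: "'e set"
    and ends1 ends2 ends :: "'e \<Rightarrow> 'v set"
  assumes "cubic V1 E1 ends1" "bridgeless V1 E1 ends1" "\<not> three_edge_colorable V1 E1 ends1"
    and "cubic V2 E2 ends2" "bridgeless V2 E2 ends2" "\<not> three_edge_colorable V2 E2 ends2"
    and "two_junction V E ends V1 E1 ends1 V2 E2 ends2"
  shows "mu3 V E ends = mu3 V1 E1 ends1 + mu3 V2 E2 ends2"
proof -
  have G: "multigraph V1 E1 ends1" "multigraph V2 E2 ends2"
    using assms(1,4) unfolding cubic_def by auto
  obtain e1 x y e2 u v f1 f2
    where "junction_of_graphs V E ends V1 E1 ends1 V2 E2 ends2 e1 x y e2 u v f1 f2"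
      and "uncovered_edge_of_mu3_core V1 E1 ends1 e1" "uncovered_edge_of_mu3_core V2 E2 ends2 e2"
    by (rule two_junction_elim[OF G assms(7)])
  then show ?thesis by (rule junction_of_graphs.mu3_junction)
qed

end
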